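(* $\mathcal{M}_{3,3}=\overline{\operatorname{RBM}_{3,2}}$, where the bar denotes topological closure in $\Delta_7$. Moreover, $\mathcal{M}_{3,3}$ and $\operatorname{RBM}_{3,2}$ contain exactly the same strictly positive distributions.
   Context: A distribution of three binary random variables is a $2\times2\times2$ tensor $p=(p_{ijk})_{i,j,k\in\{0,1\}}$ with nonnegative entries summing to $1$; the set of these is the simplex $\Delta_7$. For $a,b,c\in\mathbb{R}^2_{\ge0}$, $a\otimes b\otimes c$ is the tensor with entries $a_ib_jc_k$. $\mathcal{M}_{3,3}$ is the set of $p\in\Delta_7$ that are a sum of three tensors of the form $a\otimes b\otimes c$ with $a,b,c\in\mathbb{R}^2_{\ge0}$ (nonnegative rank at most $3$). $\operatorname{RBM}_{3,2}$ is the set of $p\in\Delta_7$ of the form $p=(a_1\otimes b_1\otimes c_1+d_1\otimes e_1\otimes f_1)*(a_2\otimes b_2\otimes c_2+d_2\otimes e_2\otimes f_2)$ with all vectors in $\mathbb{R}^2_{\ge0}$, where $*$ is the entrywise (Hadamard) product. *)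

theory Defs
  imports "HOL-Analysis.Analysis"
begin

text \<open>A 2x2x2 tensor is a function bool \<Rightarrow> bool \<Rightarrow> bool \<Rightarrow> real
  (index 0 ~ False, 1 ~ True); a vector in R^2 is bool \<Rightarrow> real.
  The topology is the product topology of HOL-Analysis (Function_Topology),
  which on this finite index set is the Euclidean topology of R^8.\<close>

type_synonym tensor3 = "bool \<Rightarrow> bool \<Rightarrow> bool \<Rightarrow> real"
type_synonym vec2 = "bool \<Rightarrow> real"

definition nonneg2 :: "vec2 \<Rightarrow> bool" where
  "nonneg2 a \<longleftrightarrow> (\<forall>i. a i \<ge> 0)"

definition outer3 :: "vec2 \<Rightarrow> vec2 \<Rightarrow> vec2 \<Rightarrow> tensor3" where
  "outer3 a b c = (\<lambda>i j k. a i * b j * c k)"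

definition simplex7 :: "tensor3 set" where
  "simplex7 = {p. (\<forall>i j k. p i j k \<ge> 0) \<and> (\<Sum>i\<in>UNIV. \<Sum>j\<in>UNIV. \<Sum>k\<in>UNIV. p i j k) = 1}"

definition M33 :: "tensor3 set" where
  "M33 = {p \<in> simplex7. \<exists>a b c :: nat \<Rightarrow> vec2.
            (\<forall>r<3. nonneg2 (a r) \<and> nonneg2 (b r) \<and> nonneg2 (c r)) \<and>
            p = (\<lambda>i j k. \<Sum>r<3. outer3 (a r) (b r) (c r) i j k)}"

definition RBM32 :: "tensor3 set" where
  "RBM32 = {p \<in> simplex7. \<exists>a1 b1 c1 d1 e1 f1 a2 b2 c2 d2 e2 f2.
            nonneg2 a1 \<and> nonneg2 b1 \<and> nonneg2 c1 \<and> nonneg2 d1 \<and> nonneg2 e1 \<and> nonneg2 f1 \<and>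
            nonneg2 a2 \<and> nonneg2 b2 \<and> nonneg2 c2 \<and> nonneg2 d2 \<and> nonneg2 e2 \<and> nonneg2 f2 \<and>
            p = (\<lambda>i j k. (outer3 a1 b1 c1 i j k + outer3 d1 e1 f1 i j k) *
                         (outer3 a2 b2 c2 i j k + outer3 d2 e2 f2 i j k))}"

definition strictly_positive :: "tensor3 \<Rightarrow> bool" where
  "strictly_positive p \<longleftrightarrow> (\<forall>i j k. p i j k > 0)"

end

theory Submission
  imports Defs
begin

text \<open>Say that \<open>p\<close> has same-sign slices if along some axis the determinants of the two
  \<open>2\<times>2\<close> slices of \<open>p\<close> are both \<open>\<ge> 0\<close> or both \<open>\<le> 0\<close>. This is a closed condition.

  It holds on \<open>RBM\<^sub>3\<^sub>,\<^sub>2\<close>: the slice determinants of \<open>a\<otimes>b\<otimes>c + d\<otimes>e\<otimes>f\<close> along the three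
  axes are \<open>a\<^sub>i d\<^sub>i [b,e][c,f]\<close>, \<open>b\<^sub>i e\<^sub>i [a,d][c,f]\<close> and \<open>c\<^sub>i f\<^sub>i [a,d][b,e]\<close>; the product of
  the three brackets is a square, so for the two Hadamard factors some axis has brackets of equal
  sign, and a Hadamard product of nonnegative matrices with determinants of equal sign keeps that
  sign. It holds on \<open>\<M>\<^sub>3\<^sub>,\<^sub>3\<close>: in each of the three factor families one vector lies in the
  cone of the other two, and an explicit formula for the slice determinants settles every
  configuration of these "middle" vectors.

  Conversely, if the slice determinants along the first axis share a sign, every slice of a
  nonnegative \<open>p\<close> is a nonnegative rank-one matrix plus a nonnegative multiple of one fixed matrix
  unit. Such a \<open>p\<close> visibly has nonnegative rank three; if it is positive it factors as a
  rank-two tensor times \<open>1 + \<mu>\<otimes>e\<^sub>j\<otimes>e\<^sub>k\<close>, hence lies in \<open>RBM\<^sub>3\<^sub>,\<^sub>2\<close>; and shifting the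
  rank-one parts slightly makes it positive, so it always lies in the closure.\<close>

section \<open>Slice determinants\<close>

definition cross :: "vec2 \<Rightarrow> vec2 \<Rightarrow> real" where
  "cross u v = u False * v True - u True * v False"

definition slice_det :: "tensor3 \<Rightarrow> bool \<Rightarrow> real" where
  "slice_det p i = p i False False * p i True True - p i False True * p i True False"

definition samesign :: "(bool \<Rightarrow> real) \<Rightarrow> bool" where
  "samesign d \<longleftrightarrow> (\<forall>i. 0 \<le> d i) \<or> (\<forall>i. d i \<le> 0)"

definition swap12 :: "tensor3 \<Rightarrow> tensor3" where
  "swap12 p = (\<lambda>i j k. p j i k)"

definition rot :: "tensor3 \<Rightarrow> tensor3" where
  "rot p = (\<lambda>i j k. p j k i)"

text \<open>\<open>slice_det (swap12 p)\<close> and \<open>slice_det (rot p)\<close> are the slice determinants along the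
  second and third axis.\<close>

definition samesign_slices :: "tensor3 \<Rightarrow> bool" where
  "samesign_slices p \<longleftrightarrow>
     samesign (slice_det p) \<or> samesign (slice_det (swap12 p)) \<or> samesign (slice_det (rot p))"

section \<open>Products of two rank-two tensors\<close>

lemma slice_dets_rank2:
  fixes a b c d e f :: vec2
  defines "F \<equiv> \<lambda>i j k. outer3 a b c i j k + outer3 d e f i j k"
  shows "slice_det F i = a i * d i * (cross b e * cross c f)"
    and "slice_det (swap12 F) i = b i * e i * (cross a d * cross c f)"
    and "slice_det (rot F) i = c i * f i * (cross a d * cross b e)"
  unfolding F_def slice_det_def swap12_def rot_def outer3_def cross_def by algebra+

lemma slice_det_hadamard_nonneg:
  assumes "\<And>j k. 0 \<le> F i j k" "\<And>j k. 0 \<le> G i j k"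
    and "0 \<le> slice_det F i" "0 \<le> slice_det G i"
  shows "0 \<le> slice_det (\<lambda>i j k. F i j k * G i j k) i"
proof -
  have "(F i False True * F i True False) * (G i False True * G i True False)
      \<le> (F i False False * F i True True) * (G i False False * G i True True)"
  proof (rule mult_mono)
    show "0 \<le> G i False True * G i True False"
      using assms(2) by simp
    have "0 \<le> F i False True * F i True False"
      using assms(1) by simp
    then show "0 \<le> F i False False * F i True True"
      using assms(3) unfolding slice_det_def by linarith
  qed (use assms(3,4) in \<open>simp_all add: slice_det_def\<close>)
  then show ?thesis by (simp add: slice_det_def algebra_simps)
qed

lemma slice_det_hadamard_nonpos:
  assumes "\<And>j k. 0 \<le> F i j k" "\<And>j k. 0 \<le> G i j k"
    and "slice_det F i \<le> 0" "slice_det G i \<le> 0"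
  shows "slice_det (\<lambda>i j k. F i j k * G i j k) i \<le> 0"
proof -
  have "(F i False False * F i True True) * (G i False False * G i True True)
      \<le> (F i False True * F i True False) * (G i False True * G i True False)"
  proof (rule mult_mono)
    show "0 \<le> G i False False * G i True True"
      using assms(2) by simp
    have "0 \<le> F i False False * F i True True"
      using assms(1) by simp
    then show "0 \<le> F i False True * F i True False"
      using assms(3) unfolding slice_det_def by linarith
  qed (use assms(3,4) in \<open>simp_all add: slice_det_def\<close>)
  then show ?thesis by (simp add: slice_det_def algebra_simps)
qed

lemma samesign_slice_det_hadamard:
  assumes F: "\<And>i j k. 0 \<le> F i j k" and G: "\<And>i j k. 0 \<le> G i j k"
    and "\<And>i. slice_det F i = x i * \<sigma>" "\<And>i. slice_det G i = y i * \<tau>"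
    and "\<And>i. 0 \<le> x i" "\<And>i. 0 \<le> y i" "0 \<le> \<sigma> * \<tau>"
  shows "samesign (slice_det (\<lambda>i j k. F i j k * G i j k))"
proof -
  from \<open>0 \<le> \<sigma> * \<tau>\<close> consider "0 \<le> \<sigma>" "0 \<le> \<tau>" | "\<sigma> \<le> 0" "\<tau> \<le> 0"
    by (auto simp: zero_le_mult_iff)
  then show ?thesis
  proof cases
    case 1
    then show ?thesis unfolding samesign_def
      using assms by (intro disjI1 allI slice_det_hadamard_nonneg) auto
  next
    case 2
    then show ?thesis unfolding samesign_def
      using assms by (intro disjI2 allI slice_det_hadamard_nonpos) (auto simp: mult_nonneg_nonpos)
  qed
qed

lemma one_of_three_products_nonneg:
  fixes A1 A2 A3 B1 B2 B3 :: real
  assumes "0 \<le> A1 * A2 * A3" "0 \<le> B1 * B2 * B3"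
  shows "0 \<le> A1 * B1 \<or> 0 \<le> A2 * B2 \<or> 0 \<le> A3 * B3"
proof (rule ccontr)
  assume "\<not> ?thesis"
  then have "(A1 * B1) * (A2 * B2) * (A3 * B3) < 0"
    by (simp add: mult_neg_neg mult_pos_neg)
  moreover have "0 \<le> (A1 * A2 * A3) * (B1 * B2 * B3)"
    using assms by simp
  ultimately show False by (simp add: algebra_simps)
qed

lemma samesign_slices_hadamard_rank2:
  assumes "nonneg2 a1" "nonneg2 b1" "nonneg2 c1" "nonneg2 d1" "nonneg2 e1" "nonneg2 f1"
    "nonneg2 a2" "nonneg2 b2" "nonneg2 c2" "nonneg2 d2" "nonneg2 e2" "nonneg2 f2"
  shows "samesign_slices (\<lambda>i j k. (outer3 a1 b1 c1 i j k + outer3 d1 e1 f1 i j k) *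
                                 (outer3 a2 b2 c2 i j k + outer3 d2 e2 f2 i j k))"
proof -
  define F where "F = (\<lambda>i j k. outer3 a1 b1 c1 i j k + outer3 d1 e1 f1 i j k)"
  define G where "G = (\<lambda>i j k. outer3 a2 b2 c2 i j k + outer3 d2 e2 f2 i j k)"
  have F0: "0 \<le> F i j k" and G0: "0 \<le> G i j k" for i j k
    using assms by (auto simp: F_def G_def outer3_def nonneg2_def)
  have nonneg: "0 \<le> u i * v i" if "nonneg2 u" "nonneg2 v" for u v i
    using that by (simp add: nonneg2_def)
  have square: "(y * z) * (x * z) * (x * y) = (x * y * z)\<^sup>2" for x y z :: real
    by algebra
  have "0 \<le> (cross b1 e1 * cross c1 f1) * (cross a1 d1 * cross c1 f1) * (cross a1 d1 * cross b1 e1)"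
    "0 \<le> (cross b2 e2 * cross c2 f2) * (cross a2 d2 * cross c2 f2) * (cross a2 d2 * cross b2 e2)"
    unfolding square by simp_all
  then consider
      "0 \<le> (cross b1 e1 * cross c1 f1) * (cross b2 e2 * cross c2 f2)"
    | "0 \<le> (cross a1 d1 * cross c1 f1) * (cross a2 d2 * cross c2 f2)"
    | "0 \<le> (cross a1 d1 * cross b1 e1) * (cross a2 d2 * cross b2 e2)"
    by (blast dest: one_of_three_products_nonneg)
  then show ?thesis
  proof cases
    case 1
    have "samesign (slice_det (\<lambda>i j k. F i j k * G i j k))"
      using F0 G0 1 assms slice_dets_rank2(1)
      by (intro samesign_slice_det_hadamard[where x = "\<lambda>i. a1 i * d1 i" and y = "\<lambda>i. a2 i * d2 i"])
        (auto simp: F_def G_def nonneg)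
    then show ?thesis by (simp add: samesign_slices_def F_def G_def)
  next
    case 2
    have "samesign (slice_det (\<lambda>i j k. swap12 F i j k * swap12 G i j k))"
      using F0 G0 2 assms slice_dets_rank2(2)
      by (intro samesign_slice_det_hadamard[where x = "\<lambda>i. b1 i * e1 i" and y = "\<lambda>i. b2 i * e2 i"])
        (auto simp: F_def G_def nonneg swap12_def)
    then show ?thesis by (simp add: samesign_slices_def F_def G_def swap12_def)
  next
    case 3
    have "samesign (slice_det (\<lambda>i j k. rot F i j k * rot G i j k))"
      using F0 G0 3 assms slice_dets_rank2(3)
      by (intro samesign_slice_det_hadamard[where x = "\<lambda>i. c1 i * f1 i" and y = "\<lambda>i. c2 i * f2 i"])
        (auto simp: F_def G_def nonneg rot_def)
    then show ?thesis by (simp add: samesign_slices_def F_def G_def rot_def)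
  qed
qed

lemma RBM32_samesign_slices:
  assumes "p \<in> RBM32" shows "samesign_slices p"
proof -
  from assms obtain a1 b1 c1 d1 e1 f1 a2 b2 c2 d2 e2 f2 where
    "nonneg2 a1" "nonneg2 b1" "nonneg2 c1" "nonneg2 d1" "nonneg2 e1" "nonneg2 f1"
    "nonneg2 a2" "nonneg2 b2" "nonneg2 c2" "nonneg2 d2" "nonneg2 e2" "nonneg2 f2"
    "p = (\<lambda>i j k. (outer3 a1 b1 c1 i j k + outer3 d1 e1 f1 i j k) *
                 (outer3 a2 b2 c2 i j k + outer3 d2 e2 f2 i j k))"
    unfolding RBM32_def by (elim CollectE conjE exE) (rule that; assumption)
  then show ?thesis by (simp only: samesign_slices_hadamard_rank2)
qed

section \<open>Tensors of nonnegative rank three\<close>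

definition in_cone :: "vec2 \<Rightarrow> vec2 \<Rightarrow> vec2 \<Rightarrow> bool" where
  "in_cone z x y \<longleftrightarrow> (\<exists>l m. 0 \<le> l \<and> 0 \<le> m \<and> (\<forall>i. z i = l * x i + m * y i))"

lemma in_cone_commute: "in_cone z x y \<longleftrightarrow> in_cone z y x"
  unfolding in_cone_def by (metis add.commute)

lemma cross_cramer: "cross x y * z i = cross z y * x i + cross x z * y i"
  by (cases i) (simp_all add: cross_def algebra_simps)

lemma in_cone_if_cross_nonneg:
  assumes "nonneg2 x" "nonneg2 y" "nonneg2 z"
    and "\<exists>i. 0 < x i" "\<exists>i. 0 < y i" "\<exists>i. 0 < z i"
    and xz: "0 \<le> cross x z" and zy: "0 \<le> cross z y"
  shows "in_cone z x y"
proof -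
  have x0: "0 \<le> x i" and y0: "0 \<le> y i" and z0: "0 \<le> z i" for i
    using assms(1-3) by (simp_all add: nonneg2_def)
  have cramer_nonneg: "0 \<le> cross x y * z i" for i
    unfolding cross_cramer[of x y z i] using x0 y0 xz zy by simp
  show ?thesis
  proof (cases "0 < cross x y")
    case True
    have "\<forall>i. z i = cross z y / cross x y * x i + cross x z / cross x y * y i"
      using cross_cramer[of x y z] True by (simp add: field_simps)
    moreover have "0 \<le> cross z y / cross x y" "0 \<le> cross x z / cross x y"
      using True xz zy by simp_all
    ultimately show ?thesis
      unfolding in_cone_def by blast
  next
    case False
    obtain i0 where "0 < z i0" using assms(6) by blast
    with cramer_nonneg[of i0] False have xy: "cross x y = 0"
      by (simp add: zero_le_mult_iff)
    obtain i1 where i1: "0 < y i1" using assms(5) by blast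
    have "cross z y * x i1 + cross x z * y i1 = 0"
      using cross_cramer[of x y z i1] xy by simp
    moreover have "0 \<le> cross z y * x i1" "0 \<le> cross x z * y i1"
      using x0 y0 xz zy by simp_all
    ultimately have "cross x z * y i1 = 0" by linarith
    then have "x False * z True = x True * z False"
      using i1 by (simp add: cross_def)
    moreover obtain i2 where i2: "0 < x i2" using assms(4) by blast
    ultimately have "\<forall>i. z i = z i2 / x i2 * x i + 0 * y i"
      by (cases i2) (auto simp: field_simps all_bool_eq)
    moreover have "0 \<le> z i2 / x i2"
      using z0 i2 by simp
    ultimately show ?thesis
      unfolding in_cone_def by (blast intro: order_refl)
  qed
qed

lemma one_in_cone_of_others:
  assumes x: "nonneg2 x" and y: "nonneg2 y" and z: "nonneg2 z"
  shows "in_cone z x y \<or> in_cone y x z \<or> in_cone x y z"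
proof -
  have zero_or_pos: "(\<forall>i. u i = 0) \<or> (\<exists>i. 0 < u i)" if "nonneg2 u" for u
    using that unfolding nonneg2_def by (metis less_eq_real_def)
  have in_cone_zero: "in_cone u v w" if "\<forall>i. u i = 0" for u v w
    unfolding in_cone_def using that by (intro exI[of _ 0]) simp
  have cross_swap: "0 \<le> cross v u" if "\<not> 0 \<le> cross u v" for u v
    using that by (simp add: cross_def mult.commute)
  consider "\<forall>i. x i = 0" | "\<forall>i. y i = 0" | "\<forall>i. z i = 0"
    | "\<exists>i. 0 < x i" "\<exists>i. 0 < y i" "\<exists>i. 0 < z i"
    using zero_or_pos x y z by blast
  then show ?thesis
  proof cases
    case 4
    note pos = this
    consider "0 \<le> cross x y" "0 \<le> cross y z"
      | "0 \<le> cross x z" "0 \<le> cross z y"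
      | "0 \<le> cross z x" "0 \<le> cross x y"
      | "0 \<le> cross y x" "0 \<le> cross x z"
      | "0 \<le> cross y z" "0 \<le> cross z x"
      | "0 \<le> cross z y" "0 \<le> cross y x"
      using cross_swap by metis
    then show ?thesis
      by cases (use in_cone_if_cross_nonneg[OF x z y] in_cone_if_cross_nonneg[OF x y z]
          in_cone_if_cross_nonneg[OF z y x] in_cone_if_cross_nonneg[OF y z x]
          in_cone_if_cross_nonneg[OF y x z] in_cone_if_cross_nonneg[OF z x y]
          pos in_cone_commute in blast)+
  qed (use in_cone_zero in blast)+
qed

definition rank3 :: "(nat \<Rightarrow> vec2) \<Rightarrow> (nat \<Rightarrow> vec2) \<Rightarrow> (nat \<Rightarrow> vec2) \<Rightarrow> tensor3" where
  "rank3 a b c = (\<lambda>i j k. \<Sum>r<3. outer3 (a r) (b r) (c r) i j k)"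

definition middle :: "(nat \<Rightarrow> vec2) \<Rightarrow> nat \<Rightarrow> bool" where
  "middle u r \<longleftrightarrow>
     r < 3 \<and> (\<forall>s t. s < 3 \<longrightarrow> t < 3 \<longrightarrow> distinct [s, t, r] \<longrightarrow> in_cone (u r) (u s) (u t))"

lemma less_3_iff: "s < 3 \<longleftrightarrow> s = 0 \<or> s = 1 \<or> s = (2::nat)"
  by auto

lemma ex_middle:
  assumes "\<forall>r<3. nonneg2 (u r)"
  shows "\<exists>r. middle u r"
proof -
  have "in_cone (u 2) (u 0) (u 1) \<or> in_cone (u 1) (u 0) (u 2) \<or> in_cone (u 0) (u 1) (u 2)"
    using assms by (intro one_in_cone_of_others) auto
  then have "middle u 2 \<or> middle u 1 \<or> middle u 0"
    unfolding middle_def less_3_iff by (auto simp: in_cone_commute)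
  then show ?thesis by blast
qed

lemma ex_others:
  assumes "r < (3::nat)"
  obtains s t where "distinct [s, t, r]" "s < 3" "t < 3"
proof -
  consider "r = 0" | "r = 1" | "r = 2" using assms by linarith
  then show ?thesis
    by cases (rule that[of 1 2] that[of 0 2] that[of 0 1]; simp)+
qed

lemma sum_lessThan_3_distinct:
  assumes "distinct [s, t, r]" "s < 3" "t < 3" "r < (3::nat)"
  shows "(\<Sum>x<3. f x) = f s + f t + (f r :: real)"
  using assms unfolding less_3_iff by (auto simp: eval_nat_numeral)

lemma rank3_distinct:
  assumes "distinct [s, t, r]" "s < 3" "t < 3" "r < 3"
  shows "rank3 a b c i j k = a s i * b s j * c s k + a t i * b t j * c t k + a r i * b r j * c r k"
  unfolding rank3_def outer3_def by (rule sum_lessThan_3_distinct[OF assms])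

lemma swap12_rank3: "swap12 (rank3 a b c) = rank3 b a c"
  by (simp add: swap12_def rank3_def outer3_def mult_ac)

lemma rot_rank3: "rot (rank3 a b c) = rank3 c a b"
  by (simp add: rot_def rank3_def outer3_def mult_ac)

lemma samesign_scaled:
  assumes "\<And>i. 0 \<le> q i"
  shows "samesign (\<lambda>i. \<kappa> * q i)"
  using assms unfolding samesign_def
  by (cases "0 \<le> \<kappa>") (auto simp: mult_nonneg_nonpos mult_nonpos_nonneg mult_nonneg_nonneg)

lemma samesign_slice_det_common_middle:
  assumes a: "middle a r" and b: "middle b r" and c: "\<forall>r<3. nonneg2 (c r)"
  shows "samesign (slice_det (rank3 c a b))"
proof -
  have r: "r < 3" using a by (simp add: middle_def)
  then obtain s t where st: "distinct [s, t, r]" "s < 3" "t < 3" by (rule ex_others)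
  obtain l m where lm: "0 \<le> l" "0 \<le> m" "\<And>i. a r i = l * a s i + m * a t i"
    using a st unfolding middle_def in_cone_def by blast
  obtain l' m' where lm': "0 \<le> l'" "0 \<le> m'" "\<And>i. b r i = l' * b s i + m' * b t i"
    using b st unfolding middle_def in_cone_def by blast
  have "slice_det (rank3 c a b) i = (cross (a s) (a t) * cross (b s) (b t)) *
      (c s i * c t i + c s i * c r i * m * m' + c t i * c r i * l * l')" for i
    by (simp only: slice_det_def rank3_distinct[OF st r] cross_def lm(3) lm'(3)) algebra
  moreover have "0 \<le> c s i * c t i + c s i * c r i * m * m' + c t i * c r i * l * l'" for i
    using c st r lm lm' by (simp add: nonneg2_def)
  ultimately show ?thesis
    using samesign_scaled by presburger
qed

lemma samesign_slice_det_distinct_middles: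
  assumes a: "middle a r" and b: "middle b t" and c: "middle c s" and st: "distinct [s, t, r]"
    and a0: "\<forall>r<3. nonneg2 (a r)" and b0: "\<forall>r<3. nonneg2 (b r)"
  shows "samesign (slice_det (rank3 a b c)) \<or> samesign (slice_det (rank3 b a c))"
proof -
  have lt: "s < 3" "t < 3" "r < 3" using a b c by (simp_all add: middle_def)
  obtain l m where lm: "0 \<le> l" "0 \<le> m" "\<And>i. a r i = l * a s i + m * a t i"
    using a st lt unfolding middle_def in_cone_def by (metis distinct_length_2_or_more)
  obtain l1 m1 where lm1: "0 \<le> l1" "0 \<le> m1" "\<And>i. b t i = l1 * b s i + m1 * b r i"
    using b st lt unfolding middle_def in_cone_def by (metis distinct_length_2_or_more)
  obtain l2 m2 where lm2: "0 \<le> l2" "0 \<le> m2" "\<And>i. c s i = l2 * c t i + m2 * c r i"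
    using c st lt unfolding middle_def in_cone_def by (metis distinct_length_2_or_more)
  text \<open>The mixed coefficients of the two determinant formulas below add up to
    \<open>2 l l1 \<ge> 0\<close>, so one of them is nonnegative.\<close>
  define K where "K = l2 * m + l1 * l - m1 * m2"
  note expand = rank3_distinct[OF st lt]
  have detA: "slice_det (rank3 a b c) i = (cross (b s) (b r) * cross (c t) (c r)) *
      (l * l2 * (a s i * a s i) + m * l1 * (a t i * a t i) + K * (a s i * a t i))" for i
    by (simp only: slice_det_def expand K_def cross_def lm(3) lm1(3) lm2(3)) algebra
  have detB: "slice_det (rank3 b a c) i = - (cross (a s) (a t) * cross (c t) (c r)) *
      (l1 * m2 * (b s i * b s i) + m1 * l * (b r i * b r i) + (l1 * l + m1 * m2 - l2 * m) * (b s i * b r i))" for i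
    by (simp only: slice_det_def expand cross_def lm(3) lm1(3) lm2(3)) algebra
  have ab0: "0 \<le> a s i" "0 \<le> a t i" "0 \<le> b s i" "0 \<le> b r i" for i
    using a0 b0 lt by (simp_all add: nonneg2_def)
  show ?thesis
  proof (cases "0 \<le> K")
    case True
    then have "samesign (slice_det (rank3 a b c))"
      unfolding detA using lm lm1 lm2 ab0 by (intro samesign_scaled add_nonneg_nonneg mult_nonneg_nonneg) auto
    then show ?thesis ..
  next
    case False
    have "0 \<le> l1 * l" using lm lm1 by simp
    then have "0 \<le> l1 * l + m1 * m2 - l2 * m"
      using False unfolding K_def by linarith
    then have "samesign (slice_det (rank3 b a c))"
      unfolding detB using lm lm1 lm2 ab0 by (intro samesign_scaled add_nonneg_nonneg mult_nonneg_nonneg) auto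
    then show ?thesis ..
  qed
qed

lemma M33_samesign_slices:
  assumes "p \<in> M33" shows "samesign_slices p"
proof -
  obtain a b c where nonneg: "\<forall>r<3. nonneg2 (a r) \<and> nonneg2 (b r) \<and> nonneg2 (c r)"
    and p: "p = rank3 a b c"
    using assms unfolding M33_def rank3_def by blast
  then have a: "\<forall>r<3. nonneg2 (a r)" and b: "\<forall>r<3. nonneg2 (b r)" and c: "\<forall>r<3. nonneg2 (c r)"
    by simp_all
  obtain ra rb rc where mid: "middle a ra" "middle b rb" "middle c rc"
    using ex_middle[OF a] ex_middle[OF b] ex_middle[OF c] by blast
  consider "rb = rc" | "ra = rb" | "ra = rc" | "distinct [rc, rb, ra]"
    by auto
  then show ?thesis
  proof cases
    case 1
    then have "samesign (slice_det (rank3 a b c))"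
      using samesign_slice_det_common_middle mid a by blast
    then show ?thesis by (simp add: samesign_slices_def p)
  next
    case 2
    then have "samesign (slice_det (rank3 c a b))"
      using samesign_slice_det_common_middle mid c by blast
    then show ?thesis by (simp add: samesign_slices_def p rot_rank3)
  next
    case 3
    then have "samesign (slice_det (rank3 b a c))"
      using samesign_slice_det_common_middle mid b by blast
    then show ?thesis by (simp add: samesign_slices_def p swap12_rank3)
  next
    case 4
    then show ?thesis
      using samesign_slice_det_distinct_middles[OF mid 4 a b]
      by (auto simp: samesign_slices_def p swap12_rank3)
  qed
qed

section \<open>Tensors with same-sign slice determinants\<close>

definition rank_one_plus_unit :: "tensor3 \<Rightarrow> bool" where
  "rank_one_plus_unit p \<longleftrightarrow> (\<exists>(U :: bool \<Rightarrow> vec2) (V :: bool \<Rightarrow> vec2) (L :: vec2) j0 k0.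
     (\<forall>i j. 0 \<le> U i j \<and> 0 \<le> V i j \<and> 0 \<le> L i) \<and>
     (\<forall>i j k. p i j k = U i j * V i k + (if j = j0 \<and> k = k0 then L i else 0)))"

lemma nonneg_matrix_det_nonneg_decomp:
  fixes M :: "bool \<Rightarrow> bool \<Rightarrow> real"
  assumes "\<And>j k. 0 \<le> M j k" and "M False True * M True False \<le> M False False * M True True"
  shows "\<exists>u v l. (\<forall>j. 0 \<le> u j \<and> 0 \<le> v j) \<and> 0 \<le> l \<and>
           (\<forall>j k. M j k = u j * v k + (if j \<and> k then l else 0))"
proof -
  define a b c d where "a = M False False" "b = M False True" "c = M True False" "d = M True True"
  have abcd: "0 \<le> a" "0 \<le> b" "0 \<le> c" "0 \<le> d" "b * c \<le> a * d"
    using assms by (simp_all add: a_b_c_d_def)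
  have M: "M j k = (if j then (if k then d else c) else (if k then b else a))" for j k
    by (simp add: a_b_c_d_def)
  show ?thesis
  proof (cases "a = 0")
    case False
    then have "0 < a" using abcd by simp
    then have "0 \<le> d - b * c / a"
      using abcd by (simp add: field_simps mult.commute)
    then show ?thesis using \<open>0 < a\<close> abcd
      by (intro exI[of _ "\<lambda>j. if j then c / a else 1"] exI[of _ "\<lambda>k. if k then b else a"]
          exI[of _ "d - b * c / a"]) (auto simp: M all_bool_eq)
  next
    case True
    then have "b = 0 \<or> c = 0" using abcd by (auto simp: mult_le_0_iff)
    then show ?thesis
    proof
      assume "b = 0"
      then show ?thesis using abcd True
        by (intro exI[of _ "\<lambda>j. if j then 1 else 0"] exI[of _ "\<lambda>k. if k then d else c"]
            exI[of _ 0]) (auto simp: M all_bool_eq)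
    next
      assume "c = 0"
      then show ?thesis using abcd True
        by (intro exI[of _ "\<lambda>j. if j then d else b"] exI[of _ "\<lambda>k. if k then 1 else 0"]
            exI[of _ 0]) (auto simp: M all_bool_eq)
    qed
  qed
qed

lemma nonneg_matrix_det_nonpos_decomp:
  fixes M :: "bool \<Rightarrow> bool \<Rightarrow> real"
  assumes "\<And>j k. 0 \<le> M j k" and "M False False * M True True \<le> M False True * M True False"
  shows "\<exists>u v l. (\<forall>j. 0 \<le> u j \<and> 0 \<le> v j) \<and> 0 \<le> l \<and>
           (\<forall>j k. M j k = u j * v k + (if \<not> j \<and> k then l else 0))"
proof -
  obtain u v l where uvl: "\<forall>j. 0 \<le> u j \<and> 0 \<le> v j" "0 \<le> l"
      and flipped: "\<forall>j k. M (\<not> j) k = u j * v k + (if j \<and> k then l else 0)"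
    using nonneg_matrix_det_nonneg_decomp[of "\<lambda>j k. M (\<not> j) k"] assms by (auto simp: mult.commute)
  have "M j k = u (\<not> j) * v k + (if \<not> j \<and> k then l else 0)" for j k
    using flipped[rule_format, of "\<not> j" k] by simp
  then show ?thesis
    using uvl by (intro exI[of _ "\<lambda>j. u (\<not> j)"] exI[of _ v] exI[of _ l]) simp
qed

lemma samesign_slice_det_rank_one_plus_unit:
  assumes nonneg: "\<And>i j k. 0 \<le> p i j k" and "samesign (slice_det p)"
  shows "rank_one_plus_unit p"
proof -
  from assms(2) consider "\<forall>i. 0 \<le> slice_det p i" | "\<forall>i. slice_det p i \<le> 0"
    unfolding samesign_def by blast
  then show ?thesis
  proof cases
    case 1
    then have "\<forall>i. \<exists>u v l. (\<forall>j. 0 \<le> u j \<and> 0 \<le> v j) \<and> 0 \<le> l \<and>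
        (\<forall>j k. p i j k = u j * v k + (if j = True \<and> k = True then l else 0))"
      using nonneg_matrix_det_nonneg_decomp[of "p _"] nonneg by (simp add: slice_det_def)
    then obtain U V L where "\<forall>i. (\<forall>j. 0 \<le> U i j \<and> 0 \<le> V i j) \<and> 0 \<le> L i \<and>
        (\<forall>j k. p i j k = U i j * V i k + (if j = True \<and> k = True then L i else 0))"
      by metis
    then show ?thesis
      unfolding rank_one_plus_unit_def by (intro exI[of _ U] exI[of _ V] exI[of _ L]) blast
  next
    case 2
    then have "\<forall>i. \<exists>u v l. (\<forall>j. 0 \<le> u j \<and> 0 \<le> v j) \<and> 0 \<le> l \<and>
        (\<forall>j k. p i j k = u j * v k + (if j = False \<and> k = True then l else 0))"
      using nonneg_matrix_det_nonpos_decomp[of "p _"] nonneg by (simp add: slice_det_def)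
    then obtain U V L where "\<forall>i. (\<forall>j. 0 \<le> U i j \<and> 0 \<le> V i j) \<and> 0 \<le> L i \<and>
        (\<forall>j k. p i j k = U i j * V i k + (if j = False \<and> k = True then L i else 0))"
      by metis
    then show ?thesis
      unfolding rank_one_plus_unit_def by (intro exI[of _ U] exI[of _ V] exI[of _ L]) blast
  qed
qed

definition unit :: "bool \<Rightarrow> vec2" where
  "unit b = (\<lambda>i. if i = b then 1 else 0)"

lemma outer3_unit_sum: "outer3 (unit False) (u False) (v False) i j k + outer3 (unit True) (u True) (v True) i j k
    = u i j * v i k"
  by (cases i) (simp_all add: outer3_def unit_def)

lemma M33_I:
  assumes "p \<in> simplex7" "nonneg2 a0" "nonneg2 b0" "nonneg2 c0" "nonneg2 a1" "nonneg2 b1" "nonneg2 c1"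
    "nonneg2 a2" "nonneg2 b2" "nonneg2 c2"
    "\<And>i j k. p i j k = outer3 a0 b0 c0 i j k + outer3 a1 b1 c1 i j k + outer3 a2 b2 c2 i j k"
  shows "p \<in> M33"
proof -
  define a where "a r = (if r = 0 then a0 else if r = 1 then a1 else a2)" for r :: nat
  define b where "b r = (if r = 0 then b0 else if r = 1 then b1 else b2)" for r :: nat
  define c where "c r = (if r = 0 then c0 else if r = 1 then c1 else c2)" for r :: nat
  have "p = (\<lambda>i j k. \<Sum>r<3. outer3 (a r) (b r) (c r) i j k)"
    using assms(11) by (simp add: a_def b_def c_def eval_nat_numeral fun_eq_iff)
  moreover have "\<forall>r<3. nonneg2 (a r) \<and> nonneg2 (b r) \<and> nonneg2 (c r)"
    using assms(2-10) by (simp add: a_def b_def c_def)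
  ultimately show ?thesis
    unfolding M33_def using assms(1) by blast
qed

lemma RBM32_I:
  assumes "p \<in> simplex7" "nonneg2 a1" "nonneg2 b1" "nonneg2 c1" "nonneg2 d1" "nonneg2 e1" "nonneg2 f1"
    "nonneg2 a2" "nonneg2 b2" "nonneg2 c2" "nonneg2 d2" "nonneg2 e2" "nonneg2 f2"
    "\<And>i j k. p i j k = (outer3 a1 b1 c1 i j k + outer3 d1 e1 f1 i j k) *
                        (outer3 a2 b2 c2 i j k + outer3 d2 e2 f2 i j k)"
  shows "p \<in> RBM32"
proof -
  have eq: "p = (\<lambda>i j k. (outer3 a1 b1 c1 i j k + outer3 d1 e1 f1 i j k) *
                         (outer3 a2 b2 c2 i j k + outer3 d2 e2 f2 i j k))"
    using assms(14) by (intro ext)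
  show ?thesis
    unfolding RBM32_def mem_Collect_eq
    by (rule conjI[OF assms(1)], rule exI[of _ a1], rule exI[of _ b1], rule exI[of _ c1],
        rule exI[of _ d1], rule exI[of _ e1], rule exI[of _ f1], rule exI[of _ a2], rule exI[of _ b2],
        rule exI[of _ c2], rule exI[of _ d2], rule exI[of _ e2], rule exI[of _ f2])
      (use assms(2-13) eq in simp)
qed

lemma rank_one_plus_unit_M33:
  assumes "rank_one_plus_unit p" "p \<in> simplex7"
  shows "p \<in> M33"
proof -
  obtain U V L j0 k0 where nonneg: "\<forall>i j. 0 \<le> U i j \<and> 0 \<le> V i j \<and> 0 \<le> L i"
    and p: "\<forall>i j k. p i j k = U i j * V i k + (if j = j0 \<and> k = k0 then L i else 0)"
    using assms(1) unfolding rank_one_plus_unit_def by blast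
  show ?thesis
  proof (rule M33_I[OF assms(2), of "unit False" "U False" "V False" "unit True" "U True" "V True"
        L "unit j0" "unit k0"])
    show "p i j k = outer3 (unit False) (U False) (V False) i j k
        + outer3 (unit True) (U True) (V True) i j k + outer3 L (unit j0) (unit k0) i j k" for i j k
      using p by (simp add: outer3_unit_sum) (simp add: outer3_def unit_def)
  qed (use nonneg in \<open>simp_all add: nonneg2_def unit_def\<close>)
qed

lemma rank_one_plus_unit_RBM32:
  assumes "rank_one_plus_unit p" "p \<in> simplex7" "strictly_positive p"
  shows "p \<in> RBM32"
proof -
  obtain U V L j0 k0 where nonneg: "\<forall>i j. 0 \<le> U i j \<and> 0 \<le> V i j \<and> 0 \<le> L i"
    and p: "\<forall>i j k. p i j k = U i j * V i k + (if j = j0 \<and> k = k0 then L i else 0)"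
    using assms(1) unfolding rank_one_plus_unit_def by blast
  have "U i j0 \<noteq> 0" "V i k0 \<noteq> 0" for i
  proof -
    have pos: "0 < p i j k" for j k
      using assms(3) unfolding strictly_positive_def by blast
    have "0 < U i j0 * V i (\<not> k0)" "0 < U i (\<not> j0) * V i k0"
      using pos[of j0 "\<not> k0"] pos[of "\<not> j0" k0] p by simp_all
    then show "U i j0 \<noteq> 0" "V i k0 \<noteq> 0" by auto
  qed
  define \<mu> where "\<mu> i = L i / (U i j0 * V i k0)" for i
  have "L i = U i j0 * V i k0 * \<mu> i" for i
    using \<open>U i j0 \<noteq> 0\<close> \<open>V i k0 \<noteq> 0\<close> by (simp add: \<mu>_def)
  then have p_factor: "p i j k = U i j * V i k * (1 + (if j = j0 \<and> k = k0 then \<mu> i else 0))"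
    for i j k
    using p by (simp add: algebra_simps)
  show ?thesis
  proof (rule RBM32_I[OF assms(2), of "unit False" "U False" "V False" "unit True" "U True" "V True"
        "\<lambda>_. 1" "\<lambda>_. 1" "\<lambda>_. 1" \<mu> "unit j0" "unit k0"])
    show "p i j k = (outer3 (unit False) (U False) (V False) i j k + outer3 (unit True) (U True) (V True) i j k) *
        (outer3 (\<lambda>_. 1) (\<lambda>_. 1) (\<lambda>_. 1) i j k + outer3 \<mu> (unit j0) (unit k0) i j k)" for i j k
      unfolding outer3_unit_sum using p_factor by (simp add: outer3_def unit_def)
  qed (use nonneg in \<open>simp_all add: nonneg2_def unit_def \<mu>_def\<close>)
qed

section \<open>Approximation and symmetry\<close>

lemma closure_if_right_limit:
  fixes h :: "real \<Rightarrow> 'a::topological_space"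
  assumes "continuous_on {0..} h" and "\<And>e. 0 < e \<Longrightarrow> h e \<in> S"
  shows "h 0 \<in> closure S"
proof (rule Lim_in_closed_set[of "closure S" h "at_right 0"])
  show "\<forall>\<^sub>F e in at_right 0. h e \<in> closure S"
    using eventually_at_right_less[of "0::real"]
    by (rule eventually_mono) (use assms(2) closure_subset in auto)
  have "(h \<longlongrightarrow> h 0) (at 0 within {0..})"
    using assms(1) by (simp add: continuous_on_def)
  then show "(h \<longlongrightarrow> h 0) (at_right 0)"
    by (rule tendsto_within_subset) auto
qed simp_all

text \<open>Shifting both rank-one factors by \<open>x > 0\<close> and renormalising gives strictly positive
  distributions of the same shape, hence points of \<open>RBM32\<close>, which tend to \<open>p\<close> as \<open>x \<rightarrow> 0\<close>.\<close>

lemma rank_one_plus_unit_closure_RBM32: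
  assumes "rank_one_plus_unit p" "p \<in> simplex7"
  shows "p \<in> closure RBM32"
proof -
  obtain U V L j0 k0 where nonneg: "\<forall>i j. 0 \<le> U i j \<and> 0 \<le> V i j \<and> 0 \<le> L i"
    and p: "\<forall>i j k. p i j k = U i j * V i k + (if j = j0 \<and> k = k0 then L i else 0)"
    using assms(1) unfolding rank_one_plus_unit_def by blast
  define q where "q x i j k = (U i j + x) * (V i k + x) + (if j = j0 \<and> k = k0 then L i else 0)"
    for x :: real and i j k
  define total where "total x = (\<Sum>i\<in>UNIV. \<Sum>j\<in>UNIV. \<Sum>k\<in>UNIV. q x i j k)" for x
  define h where "h x i j k = q x i j k / total x" for x i j k
  have q0: "q 0 = p"
    using p by (simp add: q_def fun_eq_iff)
  have total0: "total 0 = 1"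
    using assms(2) by (simp add: total_def q0 simplex7_def)
  have total_ge_1: "1 \<le> total x" if "0 \<le> x" for x
  proof -
    have "q 0 i j k \<le> q x i j k" for i j k
      using nonneg that by (simp add: q_def mult_mono)
    then have "total 0 \<le> total x"
      unfolding total_def by (intro sum_mono)
    then show ?thesis using total0 by simp
  qed
  have "h 0 = p"
    by (simp add: fun_eq_iff h_def q0 total0)
  have "continuous_on {0..} h"
    unfolding h_def[abs_def] q_def total_def
    by (intro continuous_on_coordinatewise_then_product continuous_intros) (use total_ge_1 total_def q_def in force)
  moreover have "h x \<in> RBM32" if x: "0 < x" for x
  proof (rule rank_one_plus_unit_RBM32)
    have total_pos: "0 < total x" using total_ge_1[of x] x by simp
    have q_pos: "0 < q x i j k" for i j k
    proof -
      have "0 < (U i j + x) * (V i k + x)"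
        using nonneg x by (simp add: add_nonneg_pos)
      then show ?thesis
        using nonneg by (simp add: q_def add_pos_nonneg)
    qed
    show "strictly_positive (h x)"
      using q_pos total_pos by (simp add: strictly_positive_def h_def)
    have "(\<Sum>i\<in>UNIV. \<Sum>j\<in>UNIV. \<Sum>k\<in>UNIV. h x i j k) = total x / total x"
      unfolding h_def total_def by (simp only: sum_divide_distrib)
    then show "h x \<in> simplex7"
      using q_pos total_pos by (simp add: simplex7_def h_def less_imp_le)
    show "rank_one_plus_unit (h x)"
      unfolding rank_one_plus_unit_def
    proof (intro exI conjI allI)
      show "h x i j k = (U i j + x) / total x * (V i k + x) + (if j = j0 \<and> k = k0 then L i / total x else 0)"
        for i j k
        using total_pos by (auto simp: h_def q_def field_simps)
      show "0 \<le> (U i j + x) / total x" "0 \<le> V i j + x" "0 \<le> L i / total x" for i j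
        using nonneg x total_pos by auto
    qed
  qed
  ultimately show ?thesis
    using closure_if_right_limit[of h RBM32] \<open>h 0 = p\<close> by simp
qed

lemma continuous_on_tensor_entry: "continuous_on S (\<lambda>p::tensor3. p i j k)"
proof -
  have "continuous_on UNIV (\<lambda>p::tensor3. p i)"
    by (rule continuous_on_product_coordinates)
  then have "continuous_on UNIV (\<lambda>p::tensor3. p i j)"
    using continuous_on_product_then_coordinatewise[of UNIV "\<lambda>p::tensor3. p i" j] by simp
  then have "continuous_on UNIV (\<lambda>p::tensor3. p i j k)"
    using continuous_on_product_then_coordinatewise[of UNIV "\<lambda>p::tensor3. p i j" k] by simp
  then show ?thesis by (rule continuous_on_subset) simp
qed

lemma closed_samesign_slices: "closed {p. samesign_slices p}"
  unfolding samesign_slices_def samesign_def slice_det_def swap12_def rot_def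
  by (intro closed_Collect_disj closed_Collect_all closed_Collect_le continuous_intros
      continuous_on_tensor_entry)

definition axis_symmetric :: "tensor3 set \<Rightarrow> bool" where
  "axis_symmetric S \<longleftrightarrow> (\<forall>p\<in>S. swap12 p \<in> S \<and> rot p \<in> S)"

lemma axis_symmetric_Int: "axis_symmetric S \<Longrightarrow> axis_symmetric T \<Longrightarrow> axis_symmetric (S \<inter> T)"
  by (simp add: axis_symmetric_def)

lemma axis_symmetric_strictly_positive: "axis_symmetric {p. strictly_positive p}"
  by (simp add: axis_symmetric_def strictly_positive_def swap12_def rot_def)

lemma axis_symmetric_simplex7: "axis_symmetric simplex7"
  by (simp add: axis_symmetric_def simplex7_def swap12_def rot_def UNIV_bool algebra_simps)

lemma axis_symmetric_M33: "axis_symmetric M33"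
proof -
  have M33: "M33 = {p \<in> simplex7. \<exists>a b c. (\<forall>r<3. nonneg2 (a r) \<and> nonneg2 (b r) \<and> nonneg2 (c r)) \<and>
      p = rank3 a b c}"
    by (simp add: M33_def rank3_def)
  show ?thesis
    using axis_symmetric_simplex7 unfolding axis_symmetric_def M33
    by (auto simp: swap12_rank3 rot_rank3) blast+
qed

lemma axis_symmetric_RBM32: "axis_symmetric RBM32"
proof -
  have "swap12 p \<in> RBM32 \<and> rot p \<in> RBM32" if "p \<in> RBM32" for p
  proof -
    from that obtain a1 b1 c1 d1 e1 f1 a2 b2 c2 d2 e2 f2 where
      nonneg: "nonneg2 a1" "nonneg2 b1" "nonneg2 c1" "nonneg2 d1" "nonneg2 e1" "nonneg2 f1"
        "nonneg2 a2" "nonneg2 b2" "nonneg2 c2" "nonneg2 d2" "nonneg2 e2" "nonneg2 f2" and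
      p: "p = (\<lambda>i j k. (outer3 a1 b1 c1 i j k + outer3 d1 e1 f1 i j k) *
                     (outer3 a2 b2 c2 i j k + outer3 d2 e2 f2 i j k))"
      unfolding RBM32_def by (elim CollectE conjE exE) (rule that; assumption)
    have "p \<in> simplex7" using that by (simp add: RBM32_def)
    then have "swap12 p \<in> simplex7" "rot p \<in> simplex7"
      using axis_symmetric_simplex7 by (simp_all add: axis_symmetric_def)
    then show ?thesis
      by (intro conjI RBM32_I[OF _ nonneg(2,1,3,5,4,6,8,7,9,11,10,12)]
          RBM32_I[OF _ nonneg(3,1,2,6,4,5,9,7,8,12,10,11)])
        (simp_all add: p swap12_def rot_def outer3_def mult_ac)
  qed
  then show ?thesis by (simp add: axis_symmetric_def)
qed

lemma continuous_on_swap12: "continuous_on S swap12"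
  unfolding swap12_def
  by (intro continuous_on_coordinatewise_then_product continuous_on_tensor_entry)

lemma continuous_on_rot: "continuous_on S rot"
  unfolding rot_def
  by (intro continuous_on_coordinatewise_then_product continuous_on_tensor_entry)

lemma axis_symmetric_closure: "axis_symmetric S \<Longrightarrow> axis_symmetric (closure S)"
  unfolding axis_symmetric_def
  using image_closure_subset[OF continuous_on_swap12 closed_closure, of S S]
    image_closure_subset[OF continuous_on_rot closed_closure, of S S] closure_subset
  by blast

lemma swap12_swap12: "swap12 (swap12 p) = p"
  by (simp add: swap12_def)

lemma rot_rot_rot: "rot (rot (rot p)) = p"
  by (simp add: rot_def)

text \<open>Every axis permutation is generated by \<open>swap12\<close> and \<open>rot\<close>, so it suffices to handle
  the axis along which the slice determinants have the same sign being the first one.\<close>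

lemma mem_if_samesign_slices:
  assumes "axis_symmetric S" "axis_symmetric T"
    and first_axis: "\<And>q. q \<in> S \<Longrightarrow> samesign (slice_det q) \<Longrightarrow> q \<in> T"
    and "p \<in> S" "samesign_slices p"
  shows "p \<in> T"
proof -
  have "swap12 p \<in> S" "rot p \<in> S"
    using assms(1,4) by (simp_all add: axis_symmetric_def)
  with assms(5) consider "p \<in> T" | "swap12 p \<in> T" | "rot p \<in> T"
    unfolding samesign_slices_def using first_axis assms(4) by blast
  then show ?thesis
    using assms(2) unfolding axis_symmetric_def by cases (metis swap12_swap12 rot_rot_rot)+
qed

lemma simplex7_nonneg: "p \<in> simplex7 \<Longrightarrow> 0 \<le> p i j k"
  by (simp add: simplex7_def)

theorem theorem2:
  shows "M33 = simplex7 \<inter> closure RBM32 \<and>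
         {p \<in> M33. strictly_positive p} = {p \<in> RBM32. strictly_positive p}"
proof -
  have rank_one_plus_unit: "rank_one_plus_unit q" if "q \<in> simplex7" "samesign (slice_det q)" for q
    using that by (intro samesign_slice_det_rank_one_plus_unit simplex7_nonneg)
  have M33_simplex7: "M33 \<subseteq> simplex7" and RBM32_simplex7: "RBM32 \<subseteq> simplex7"
    by (auto simp: M33_def RBM32_def)
  have closure_samesign_slices: "closure RBM32 \<subseteq> {p. samesign_slices p}"
    using RBM32_samesign_slices closed_samesign_slices by (intro closure_minimal) auto
  note symmetric = axis_symmetric_Int axis_symmetric_simplex7 axis_symmetric_M33 axis_symmetric_RBM32
    axis_symmetric_closure axis_symmetric_strictly_positive
  have "M33 \<subseteq> closure RBM32"
    using mem_if_samesign_slices[of M33 "closure RBM32"] symmetric M33_samesign_slices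
      rank_one_plus_unit rank_one_plus_unit_closure_RBM32 M33_simplex7 by blast
  moreover have "simplex7 \<inter> closure RBM32 \<subseteq> M33"
    using mem_if_samesign_slices[of "simplex7 \<inter> closure RBM32" M33] symmetric
      closure_samesign_slices rank_one_plus_unit rank_one_plus_unit_M33 by blast
  moreover have "M33 \<inter> {p. strictly_positive p} \<subseteq> RBM32"
    using mem_if_samesign_slices[of "M33 \<inter> {p. strictly_positive p}" RBM32] symmetric
      M33_samesign_slices rank_one_plus_unit rank_one_plus_unit_RBM32 M33_simplex7 by blast
  moreover have "RBM32 \<inter> {p. strictly_positive p} \<subseteq> M33"
    using mem_if_samesign_slices[of "RBM32 \<inter> {p. strictly_positive p}" M33] symmetric
      RBM32_samesign_slices rank_one_plus_unit rank_one_plus_unit_M33 RBM32_simplex7 by blast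
  ultimately show ?thesis
    using M33_simplex7 by blast
qed

end
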